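(* Let $A$ be a slender adornment with base $[x,y]$. For every point $z\in A$, the half-lens $\hat L(z)$ is contained in $A$. If moreover $A$ is symmetric, then the full lens $L(z)$ is contained in $A$ for every $z \in A$.
   Context: An adornment is a compact simply connected region $S\subset\mathbb{R}^2$ (the shape) together with a segment $[x,y]$, $x\neq y$, whose endpoints lie on the boundary of $S$ and with $[x,y]\subseteq S$ (the base). The boundary of $S$ consists of two arcs from $x$ to $y$, called the sides. The adornment is slender if, for a point $p$ moving along either side from $x$ to $y$, the distance $\|p-x\|$ is monotonically nondecreasing and the distance $\|p-y\|$ is monotonically nonincreasing (not necessarily strictly). It is symmetric if it is invariant under reflection in the line through $x$ and $y$. For a point $z$ with $\|z-x\|\le\|y-x\|$ and $\|z-y\|\le\|x-y\|$, the lens $L(z)$ is the intersection of the closed disk centered at $x$ of radius $\|z-x\|$ and the closed disk centered at $y$ of radius $\|z-y\|$; the half-lens $\hat L(z)$ is the intersection of $L(z)$ with the closed half-plane bounded by the line through $x,y$ that contains $z$. *)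

theory Defs
  imports "HOL-Analysis.Analysis"
begin

(* The plane R^2 is modelled by the type complex. *)

(* Signed cross product of (y - x) and (w - x): its sign tells on which side of the
   line through x and y the point w lies. *)
definition side_sign :: "complex \<Rightarrow> complex \<Rightarrow> complex \<Rightarrow> real" where
  "side_sign x y w = Im (cnj (y - x) * (w - x))"

definition adornment_sides ::
  "complex set \<Rightarrow> complex \<Rightarrow> complex \<Rightarrow> (real \<Rightarrow> complex) \<Rightarrow> (real \<Rightarrow> complex) \<Rightarrow> bool" where
  "adornment_sides S x y g1 g2 \<longleftrightarrow>
     arc g1 \<and> arc g2 \<and>
     pathstart g1 = x \<and> pathfinish g1 = y \<and>
     pathstart g2 = x \<and> pathfinish g2 = y \<and>
     frontier S = path_image g1 \<union> path_image g2 \<and>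
     path_image g1 \<inter> path_image g2 = {x, y}"

definition adornment :: "complex set \<Rightarrow> complex \<Rightarrow> complex \<Rightarrow> bool" where
  "adornment S x y \<longleftrightarrow>
     compact S \<and> simply_connected S \<and> x \<noteq> y \<and>
     x \<in> frontier S \<and> y \<in> frontier S \<and> closed_segment x y \<subseteq> S \<and>
     (\<exists>g1 g2. adornment_sides S x y g1 g2)"

definition slender_side :: "complex \<Rightarrow> complex \<Rightarrow> (real \<Rightarrow> complex) \<Rightarrow> bool" where
  "slender_side x y g \<longleftrightarrow>
     (\<forall>s t. 0 \<le> s \<and> s \<le> t \<and> t \<le> 1 \<longrightarrow>
        dist (g s) x \<le> dist (g t) x \<and> dist (g t) y \<le> dist (g s) y)"

definition slender :: "complex set \<Rightarrow> complex \<Rightarrow> complex \<Rightarrow> bool" where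
  "slender S x y \<longleftrightarrow> adornment S x y \<and>
     (\<forall>g1 g2. adornment_sides S x y g1 g2 \<longrightarrow> slender_side x y g1 \<and> slender_side x y g2)"

definition reflect_line :: "complex \<Rightarrow> complex \<Rightarrow> complex \<Rightarrow> complex" where
  "reflect_line x y w = x + (y - x) * cnj ((w - x) / (y - x))"

definition symmetric_adornment :: "complex set \<Rightarrow> complex \<Rightarrow> complex \<Rightarrow> bool" where
  "symmetric_adornment S x y \<longleftrightarrow> adornment S x y \<and> reflect_line x y ` S = S"

definition lens :: "complex \<Rightarrow> complex \<Rightarrow> complex \<Rightarrow> complex set" where
  "lens x y z = cball x (dist z x) \<inter> cball y (dist z y)"

(* closed half-plane bounded by line xy containing z (whole plane if z is on the line) *)
definition half_lens :: "complex \<Rightarrow> complex \<Rightarrow> complex \<Rightarrow> complex set" where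
  "half_lens x y z = lens x y z \<inter> {w. side_sign x y z * side_sign x y w \<ge> 0}"

end

theory Submission
  imports Defs "HOL-Complex_Analysis.Complex_Analysis"
begin

(* Slenderness and half-lenses are invariant under the similarities v \<mapsto> a + b v, so we
   may take x = 0 and y = 1. Along a slender side the distance to 0 grows and the distance to
   1 shrinks, hence Re grows strictly and the side is the graph of a continuous function over
   [0,1]. By the Jordan curve theorem, and because a simply connected set contains the inside
   of every simple loop in it, the adornment is exactly the region between the two graphs, and
   the base forces one graph above and one below the real axis. If z lies in the upper part
   and w in its lens with Im w \<ge> 0, then comparing w with the point of the upper graph above
   Re w (by its distance to 1 if Re w \<le> Re z, by its distance to 0 otherwise) shows that w
   lies below that graph, hence in the adornment. In the symmetric case the lens of z is the
   union of the half-lenses of z and of its mirror image. *)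

section \<open>Similarities of the plane\<close>

lemma homeomorphism_affine_complex:
  fixes a b :: complex
  assumes "b \<noteq> 0"
  shows "homeomorphism UNIV UNIV (\<lambda>v. a + b * v) (\<lambda>v. (v - a) / b)"
  using assms by (intro homeomorphismI) (auto intro!: continuous_intros simp: field_simps image_iff)

lemma frontier_affine_image:
  fixes a b :: complex
  assumes "b \<noteq> 0"
  shows "frontier ((\<lambda>v. a + b * v) ` S) = (\<lambda>v. a + b * v) ` frontier S"
proof -
  have lin: "linear ((*) b)" and inj: "inj ((*) b)"
    using assms by (auto simp: inj_on_def)
  have "frontier ((*) b ` S) = (*) b ` frontier S"
    unfolding frontier_def
    by (simp add: closure_injective_linear_image[OF lin inj, symmetric]
        interior_injective_linear_image[OF lin inj] image_set_diff[OF inj])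
  then show ?thesis
    using frontier_translation[of a "(*) b ` S"] by (simp add: image_image)
qed

lemma closed_segment_affine_image:
  fixes a b :: complex
  shows "closed_segment (a + b * x) (a + b * y) = (\<lambda>v. a + b * v) ` closed_segment x y"
  using closed_segment_linear_image[of "(*) b" x y] closed_segment_translation[of a "b * x" "b * y"]
  by (simp add: image_image)

lemma adornment_sides_affine_image:
  fixes a b :: complex
  assumes "b \<noteq> 0" and "adornment_sides S x y g1 g2"
  shows "adornment_sides ((\<lambda>v. a + b * v) ` S) (a + b * x) (a + b * y)
           ((\<lambda>v. a + b * v) \<circ> g1) ((\<lambda>v. a + b * v) \<circ> g2)"
proof -
  have inj: "inj (\<lambda>v. a + b * v)"
    using \<open>b \<noteq> 0\<close> by (auto simp: inj_on_def)
  have "arc ((\<lambda>v. a + b * v) \<circ> g)" if "arc g" for g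
    using that unfolding arc_def
    by (auto intro!: path_continuous_image continuous_intros comp_inj_on inj_on_subset[OF inj])
  with assms show ?thesis
    unfolding adornment_sides_def
    by (auto simp: frontier_affine_image pathstart_compose pathfinish_compose path_image_compose
        image_Un simp flip: image_Int[OF inj])
qed

lemma slender_side_affine_image:
  fixes a b :: complex
  assumes "slender_side x y g"
  shows "slender_side (a + b * x) (a + b * y) ((\<lambda>v. a + b * v) \<circ> g)"
  using assms unfolding slender_side_def
  by (simp add: dist_mult_left mult_left_mono)

lemma adornment_affine_image:
  fixes a b :: complex
  assumes "b \<noteq> 0" and "adornment S x y"
  shows "adornment ((\<lambda>v. a + b * v) ` S) (a + b * x) (a + b * y)"
proof -
  obtain g1 g2 where "adornment_sides S x y g1 g2"
    using assms(2) by (auto simp: adornment_def)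
  then have sides: "adornment_sides ((\<lambda>v. a + b * v) ` S) (a + b * x) (a + b * y)
           ((\<lambda>v. a + b * v) \<circ> g1) ((\<lambda>v. a + b * v) \<circ> g2)"
    by (rule adornment_sides_affine_image[OF \<open>b \<noteq> 0\<close>])
  have "homeomorphism S ((\<lambda>v. a + b * v) ` S) (\<lambda>v. a + b * v) (\<lambda>v. (v - a) / b)"
    using homeomorphism_affine_complex[OF \<open>b \<noteq> 0\<close>, of a]
    by (rule homeomorphism_of_subsets) auto
  then have "S homeomorphic (\<lambda>v. a + b * v) ` S" by (auto simp: homeomorphic_def)
  moreover have "continuous_on S (\<lambda>v. a + b * v)" by (auto intro!: continuous_intros)
  ultimately show ?thesis using assms sides
    unfolding adornment_def
    by (auto simp: frontier_affine_image closed_segment_affine_image inj_on_def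
        intro: compact_continuous_image homeomorphic_simply_connected image_mono)
qed

lemma slender_affine_image:
  fixes a b :: complex
  assumes "b \<noteq> 0" and "slender S x y"
  shows "slender ((\<lambda>v. a + b * v) ` S) (a + b * x) (a + b * y)"
proof -
  have "slender_side (a + b * x) (a + b * y) h1 \<and> slender_side (a + b * x) (a + b * y) h2"
    if "adornment_sides ((\<lambda>v. a + b * v) ` S) (a + b * x) (a + b * y) h1 h2" for h1 h2
  proof -
    have "adornment_sides S x y ((\<lambda>v. - a / b + 1 / b * v) \<circ> h1) ((\<lambda>v. - a / b + 1 / b * v) \<circ> h2)"
      using adornment_sides_affine_image[OF _ that, of "1 / b" "- a / b"] \<open>b \<noteq> 0\<close>
      by (simp add: image_image field_simps)
    then have "slender_side x y ((\<lambda>v. - a / b + 1 / b * v) \<circ> h)" if "h \<in> {h1, h2}" for h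
      using assms that by (auto simp: slender_def)
    from slender_side_affine_image[OF this, of _ a b] show ?thesis
      using \<open>b \<noteq> 0\<close> by (simp add: comp_def field_simps)
  qed
  then show ?thesis
    using assms by (simp add: slender_def adornment_affine_image)
qed

lemma affine_image_eqI:
  fixes a b :: complex
  assumes "b \<noteq> 0" and "\<And>u. a + b * u \<in> A \<longleftrightarrow> u \<in> B"
  shows "A = (\<lambda>v. a + b * v) ` B"
proof (intro set_eqI iffI)
  fix w assume "w \<in> A"
  moreover have "w = a + b * ((w - a) / b)" using assms(1) by simp
  ultimately show "w \<in> (\<lambda>v. a + b * v) ` B" using assms(2) by (metis image_eqI)
qed (use assms(2) in auto)

lemma lens_affine_image:
  fixes a b :: complex
  assumes "b \<noteq> 0"
  shows "lens (a + b * x) (a + b * y) (a + b * z) = (\<lambda>v. a + b * v) ` lens x y z"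
  using assms
  by (intro affine_image_eqI) (simp_all add: lens_def dist_mult_left dist_commute)

lemma side_sign_affine_image:
  fixes a b :: complex
  shows "side_sign (a + b * x) (a + b * y) (a + b * w) = (cmod b)\<^sup>2 * side_sign x y w"
proof -
  have "cnj (b * y - b * x) * (b * w - b * x) = (cnj b * b) * (cnj (y - x) * (w - x))"
    by (simp add: algebra_simps)
  also have "cnj b * b = of_real ((cmod b)\<^sup>2)"
    by (metis complex_norm_square mult.commute)
  finally show ?thesis by (simp add: side_sign_def)
qed

lemma half_lens_affine_image:
  fixes a b :: complex
  assumes "b \<noteq> 0"
  shows "half_lens (a + b * x) (a + b * y) (a + b * z) = (\<lambda>v. a + b * v) ` half_lens x y z"
proof (rule affine_image_eqI[OF assms])
  fix u
  let ?s = "side_sign (a + b * x) (a + b * y)"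
  have "?s (a + b * z) * ?s (a + b * u)
          = (cmod b)\<^sup>2 * (cmod b)\<^sup>2 * (side_sign x y z * side_sign x y u)"
    by (simp add: side_sign_affine_image algebra_simps)
  moreover have "0 < (cmod b)\<^sup>2 * (cmod b)\<^sup>2" using assms by simp
  ultimately have "0 \<le> ?s (a + b * z) * ?s (a + b * u) \<longleftrightarrow> 0 \<le> side_sign x y z * side_sign x y u"
    by (metis mult_le_cancel_left_pos mult_zero_right)
  then show "a + b * u \<in> half_lens (a + b * x) (a + b * y) (a + b * z) \<longleftrightarrow> u \<in> half_lens x y z"
    using assms by (auto simp: half_lens_def lens_affine_image)
qed

lemma reflect_line_dist:
  assumes "x \<noteq> y"
  shows "dist (reflect_line x y z) x = dist z x" "dist (reflect_line x y z) y = dist z y"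
proof -
  define q where "q = (z - x) / (y - x)"
  have "z - x = (y - x) * q" "z - y = (y - x) * (q - 1)"
    "reflect_line x y z - x = (y - x) * cnj q" "reflect_line x y z - y = (y - x) * cnj (q - 1)"
    using assms by (simp_all add: q_def reflect_line_def field_simps)
  then show "dist (reflect_line x y z) x = dist z x" "dist (reflect_line x y z) y = dist z y"
    by (simp_all only: dist_norm norm_mult complex_mod_cnj)
qed

lemma side_sign_reflect_line:
  assumes "x \<noteq> y"
  shows "side_sign x y (reflect_line x y z) = - side_sign x y z"
proof -
  have eq: "cnj (y - x) * (reflect_line x y z - x) = cnj (cnj (y - x) * (z - x))"
    using assms by (simp add: reflect_line_def field_simps)
  show ?thesis unfolding side_sign_def eq by (simp add: algebra_simps)
qed

lemma lens_eq_half_lens_Un_reflect_line: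
  assumes "x \<noteq> y"
  shows "lens x y z = half_lens x y z \<union> half_lens x y (reflect_line x y z)"
proof -
  have "lens x y (reflect_line x y z) = lens x y z"
    using assms by (simp add: lens_def reflect_line_dist)
  then show ?thesis
    using assms by (auto simp: half_lens_def side_sign_reflect_line)
qed

section \<open>Graphs over the unit interval and the region between them\<close>

lemma bounded_ray_meets_frontier:
  fixes S :: "'a::real_normed_vector set"
  assumes "bounded S" "v \<in> S" "d \<noteq> 0"
  obtains t where "0 \<le> t" "v + t *\<^sub>R d \<in> frontier S"
proof -
  obtain B where B: "\<And>w. w \<in> S \<Longrightarrow> norm w \<le> B"
    using assms(1) by (auto simp: bounded_iff)
  define t where "t = (B + norm v + 1) / norm d"
  have pos: "0 \<le> B + norm v + 1"
    using B[OF assms(2)] norm_ge_zero[of v] by linarith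
  then have "0 \<le> t" by (simp add: t_def)
  have "norm (t *\<^sub>R d) = B + norm v + 1"
    using pos assms(3) by (simp add: t_def)
  moreover have "norm (t *\<^sub>R d) \<le> norm (v + t *\<^sub>R d) + norm v"
    using norm_triangle_ineq4[of "v + t *\<^sub>R d" v] by simp
  ultimately have "B < norm (v + t *\<^sub>R d)" by linarith
  then have "v + t *\<^sub>R d \<notin> S"
    using B by (meson not_le)
  then have "(\<lambda>t. v + t *\<^sub>R d) ` {0..} - S \<noteq> {}"
    using \<open>0 \<le> t\<close> by auto
  moreover have "(\<lambda>t. v + t *\<^sub>R d) ` {0..} \<inter> S \<noteq> {}"
    using assms(2) by (auto intro!: image_eqI[of v _ 0])
  moreover have "connected ((\<lambda>t. v + t *\<^sub>R d) ` {0..})"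
    by (intro connected_continuous_image connected_Ici continuous_intros)
  ultimately show ?thesis
    using connected_Int_frontier that by blast
qed

lemma inside_simple_loop_subset:
  fixes c :: "real \<Rightarrow> complex"
  assumes "simply_connected S" "simple_path c" "pathfinish c = pathstart c" "path_image c \<subseteq> S"
  shows "inside (path_image c) \<subseteq> S"
proof
  fix v assume v: "v \<in> inside (path_image c)"
  show "v \<in> S"
  proof (rule ccontr)
    assume "v \<notin> S"
    then have "winding_number c v = 0"
      using simply_connected_imp_winding_number_zero[OF assms(1) simple_path_imp_path[OF assms(2)]]
        assms(3,4) by blast
    moreover have "winding_number c v \<noteq> 0"
      by (rule simple_closed_path_winding_number_inside[OF assms(2)]) (use v in auto)
    ultimately show False by contradiction
  qed
qed

lemma strict_mono_on_unit_interval_homeomorphism: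
  fixes r :: "real \<Rightarrow> real"
  assumes "continuous_on {0..1} r" "strict_mono_on {0..1} r" "r 0 = 0" "r 1 = 1"
  obtains \<sigma> where "homeomorphism {0..1} {0..1} r \<sigma>" "mono_on {0..1} \<sigma>"
proof -
  have "r ` {0..1} = {0..1}"
  proof (intro equalityI subsetI)
    fix u assume "u \<in> r ` {0..1}"
    then show "u \<in> {0..1}"
      using assms(3,4) strict_mono_on_leD[OF assms(2), of 0] strict_mono_on_leD[OF assms(2), of _ 1]
      by force
  next
    fix u :: real assume "u \<in> {0..1}"
    then show "u \<in> r ` {0..1}"
      using IVT'[of r 0 u 1, OF _ _ _ assms(1)] assms(3,4) by force
  qed
  then obtain \<sigma> where \<sigma>: "homeomorphism {0..1} {0..1} r \<sigma>"
    using homeomorphism_compact[OF compact_Icc assms(1) _ strict_mono_on_imp_inj_on[OF assms(2)]]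
    by blast
  have \<sigma>_in: "\<sigma> t \<in> {0..1}" if "t \<in> {0..1}" for t
    using homeomorphism_image2[OF \<sigma>] that by blast
  have "\<sigma> s \<le> \<sigma> t" if "s \<in> {0..1}" "t \<in> {0..1}" "s \<le> t" for s t
  proof (rule ccontr)
    assume "\<not> \<sigma> s \<le> \<sigma> t"
    then have "r (\<sigma> t) < r (\<sigma> s)"
      using strict_mono_onD[OF assms(2)] \<sigma>_in that by simp
    then show False
      using homeomorphism_apply2[OF \<sigma>] that by simp
  qed
  then have "mono_on {0..1} \<sigma>" by (auto simp: mono_on_def)
  with \<sigma> show ?thesis by (rule that)
qed

definition graph_path :: "(real \<Rightarrow> real) \<Rightarrow> real \<Rightarrow> complex" where
  "graph_path f t = Complex t (f t)"

definition region_between :: "(real \<Rightarrow> real) \<Rightarrow> (real \<Rightarrow> real) \<Rightarrow> complex set" where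
  "region_between f g = {u. 0 \<le> Re u \<and> Re u \<le> 1 \<and> f (Re u) \<le> Im u \<and> Im u \<le> g (Re u)}"

definition open_region_between :: "(real \<Rightarrow> real) \<Rightarrow> (real \<Rightarrow> real) \<Rightarrow> complex set" where
  "open_region_between f g = {u. 0 < Re u \<and> Re u < 1 \<and> f (Re u) < Im u \<and> Im u < g (Re u)}"

lemma path_image_graph_path:
  "path_image (graph_path f) = {u. 0 \<le> Re u \<and> Re u \<le> 1 \<and> Im u = f (Re u)}"
  by (force simp: path_image_def graph_path_def complex_eq_iff)

lemma pathstart_graph_path [simp]: "pathstart (graph_path f) = Complex 0 (f 0)"
  and pathfinish_graph_path [simp]: "pathfinish (graph_path f) = Complex 1 (f 1)"
  by (simp_all add: pathstart_def pathfinish_def graph_path_def)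

lemma arc_graph_path:
  assumes "continuous_on {0..1} f"
  shows "arc (graph_path f)"
  unfolding arc_def path_def
proof
  show "continuous_on {0..1} (graph_path f)"
    unfolding graph_path_def Complex_eq by (intro continuous_intros assms)
  show "inj_on (graph_path f) {0..1}"
    by (auto simp: inj_on_def graph_path_def)
qed

lemma simple_path_graph_loop:
  assumes "continuous_on {0..1} f" "continuous_on {0..1} g" "f 0 = g 0" "f 1 = g 1"
    and "\<And>t. 0 < t \<Longrightarrow> t < 1 \<Longrightarrow> f t < g t"
  shows "simple_path (graph_path f +++ reversepath (graph_path g))"
proof (rule simple_path_join_loop)
  show "path_image (graph_path f) \<inter> path_image (reversepath (graph_path g))
        \<subseteq> {pathstart (graph_path f), pathstart (reversepath (graph_path g))}"
  proof
    fix u assume u: "u \<in> path_image (graph_path f) \<inter> path_image (reversepath (graph_path g))"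
    then have "Re u = 0 \<or> Re u = 1"
      using assms(5)[of "Re u"] by (force simp: path_image_reversepath path_image_graph_path)
    with u show "u \<in> {pathstart (graph_path f), pathstart (reversepath (graph_path g))}"
      using assms(3,4) by (auto simp: path_image_reversepath path_image_graph_path complex_eq_iff)
  qed
qed (use assms in \<open>simp_all add: arc_graph_path arc_reversepath\<close>)

lemma region_between_subset:
  assumes "f 0 = g 0" "f 1 = g 1"
  shows "region_between f g
           \<subseteq> open_region_between f g \<union> path_image (graph_path f) \<union> path_image (graph_path g)"
proof
  fix u assume u: "u \<in> region_between f g"
  show "u \<in> open_region_between f g \<union> path_image (graph_path f) \<union> path_image (graph_path g)"
  proof (cases "Re u = 0 \<or> Re u = 1")
    case True
    then have "Im u = f (Re u)"
      using u assms by (auto simp: region_between_def)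
    then show ?thesis using u by (simp add: region_between_def path_image_graph_path)
  next
    case False
    then show ?thesis
      using u by (auto simp: region_between_def open_region_between_def path_image_graph_path)
  qed
qed

lemma connected_open_region_between:
  assumes "continuous_on {0..1} f" "continuous_on {0..1} g"
    and "\<And>t. 0 < t \<Longrightarrow> t < 1 \<Longrightarrow> f t < g t"
  shows "connected (open_region_between f g)"
proof -
  define F where "F p = Complex (fst p) ((1 - snd p) * f (fst p) + snd p * g (fst p))"
    for p :: "real \<times> real"
  have "F ` ({0<..<1} \<times> {0<..<1}) = open_region_between f g"
  proof (intro equalityI subsetI)
    fix u assume "u \<in> F ` ({0<..<1} \<times> {0<..<1})"
    then obtain t l where "0 < t" "t < 1" "0 < l" "l < 1" "u = F (t, l)" by auto
    moreover have "f t < g t" using assms(3) \<open>0 < t\<close> \<open>t < 1\<close> .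
    ultimately show "u \<in> open_region_between f g"
      using mult_strict_left_mono[of "f t" "g t" l] mult_strict_left_mono[of "f t" "g t" "1 - l"]
      by (simp add: F_def open_region_between_def algebra_simps)
  next
    fix u assume u: "u \<in> open_region_between f g"
    define l where "l = (Im u - f (Re u)) / (g (Re u) - f (Re u))"
    have d: "g (Re u) - f (Re u) > 0"
      using u by (simp add: open_region_between_def)
    have "(1 - l) * f (Re u) + l * g (Re u) = f (Re u) + l * (g (Re u) - f (Re u))"
      by (simp add: algebra_simps)
    also have "\<dots> = Im u"
      using d by (simp add: l_def)
    finally have "u = F (Re u, l)"
      by (simp add: F_def complex_eq_iff)
    moreover have "0 < l" "l < 1"
      using u d by (auto simp: l_def open_region_between_def field_simps)
    ultimately show "u \<in> F ` ({0<..<1} \<times> {0<..<1})"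
      using u by (force simp: open_region_between_def)
  qed
  moreover have "continuous_on ({0<..<1} \<times> {0<..<1}) F"
    unfolding F_def Complex_eq
    by (intro continuous_intros continuous_on_compose2[OF assms(1)] continuous_on_compose2[OF assms(2)])
       auto
  ultimately show ?thesis
    by (metis connected_Ioo connected_Times connected_continuous_image)
qed

lemma bounded_subset_region_between:
  assumes "bounded S" "frontier S \<subseteq> region_between f g"
  shows "S \<subseteq> region_between f g"
proof
  fix v assume "v \<in> S"
  show "v \<in> region_between f g"
  proof (rule ccontr)
    assume v: "v \<notin> region_between f g"
    obtain d where "d \<noteq> 0" and d: "\<And>t. 0 \<le> t \<Longrightarrow> v + t *\<^sub>R d \<notin> region_between f g"
    proof (cases "Im v < f (Re v)")
      case True
      then show ?thesis by (intro that[of "- \<i>"]) (auto simp: region_between_def)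
    next
      case False
      then show ?thesis using v by (intro that[of \<i>]) (auto simp: region_between_def)
    qed
    obtain t where "0 \<le> t" "v + t *\<^sub>R d \<in> frontier S"
      using bounded_ray_meets_frontier[OF assms(1) \<open>v \<in> S\<close> \<open>d \<noteq> 0\<close>] .
    then show False using assms(2) d by blast
  qed
qed

lemma graph_path_values_differ:
  assumes "path_image (graph_path f) \<inter> path_image (graph_path g) = {0, 1}" "0 < t" "t < 1"
  shows "f t \<noteq> g t"
proof
  assume "f t = g t"
  then have "Complex t (f t) \<in> {0, 1}"
    using assms by (simp add: path_image_graph_path flip: assms(1))
  then show False
    using assms(2,3) by (auto simp: complex_eq_iff)
qed

lemma continuous_graphs_ordered:
  fixes f g :: "real \<Rightarrow> real"
  assumes "continuous_on {0..1} f" "continuous_on {0..1} g"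
    and "\<And>t. 0 < t \<Longrightarrow> t < 1 \<Longrightarrow> f t \<noteq> g t"
  shows "(\<forall>t. 0 < t \<and> t < 1 \<longrightarrow> f t < g t) \<or> (\<forall>t. 0 < t \<and> t < 1 \<longrightarrow> g t < f t)"
proof (rule ccontr)
  assume "\<not> ?thesis"
  then obtain a b where "0 < a" "a < 1" "\<not> f a < g a" "0 < b" "b < 1" "\<not> g b < f b"
    by blast
  then have ab: "0 < a" "a < 1" "0 < b" "b < 1" "g a < f a" "f b < g b"
    using assms(3)[of a] assms(3)[of b] by auto
  then have "closed_segment a b \<subseteq> {0<..<1}"
    by (auto simp: closed_segment_eq_real_ivl)
  moreover have "continuous_on {0..1} (\<lambda>t. g t - f t)"
    by (intro continuous_intros assms(1,2))
  then have "continuous_on (closed_segment a b) (\<lambda>t. g t - f t)"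
    by (rule continuous_on_subset) (use calculation in auto)
  moreover have "0 \<in> closed_segment (g a - f a) (g b - f b)"
    using ab by (auto simp: closed_segment_eq_real_ivl)
  ultimately obtain t where "t \<in> {0<..<1}" "g t - f t = 0"
    using IVT'_closed_segment_real[where f = "\<lambda>t. g t - f t" and a = a and b = b] by blast
  then show False using assms(3)[of t] by simp
qed

lemma eq_region_between_if_frontier:
  assumes "compact S" "simply_connected S"
    and "continuous_on {0..1} f" "continuous_on {0..1} g" "f 0 = g 0" "f 1 = g 1"
    and "\<And>t. 0 < t \<Longrightarrow> t < 1 \<Longrightarrow> f t < g t"
    and frontier: "frontier S = path_image (graph_path f) \<union> path_image (graph_path g)"
  shows "S = region_between f g"
proof -
  have "f t \<le> g t" if "0 \<le> t" "t \<le> 1" for t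
    using assms(5,6) assms(7)[of t] that by (cases "t = 0 \<or> t = 1") auto
  then have frontier_sub: "frontier S \<subseteq> region_between f g"
    by (auto simp: frontier region_between_def path_image_graph_path)
  then have S_sub: "S \<subseteq> region_between f g"
    by (simp add: bounded_subset_region_between compact_imp_bounded assms(1))
  have closed: "frontier S \<subseteq> S"
    by (simp add: frontier_subset_closed compact_imp_closed assms(1))
  define c where "c = graph_path f +++ reversepath (graph_path g)"
  have c: "simple_path c" "pathfinish c = pathstart c" "path_image c = frontier S"
    using simple_path_graph_loop[OF assms(3-7)] assms(5,6)
    by (simp_all add: c_def frontier path_image_join path_image_reversepath)
  have "open_region_between f g \<inter> S \<noteq> {}"
  proof
    \<comment> \<open>otherwise S would be the Jordan curve c, yet it contains the nonempty inside of c\<close>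
    assume "open_region_between f g \<inter> S = {}"
    then have "S \<subseteq> path_image c"
      using S_sub region_between_subset[OF assms(5,6)] c(3) frontier by blast
    moreover have "inside (path_image c) \<subseteq> S"
      using inside_simple_loop_subset[OF assms(2) c(1,2)] c(3) closed by blast
    ultimately show False
      using Jordan_inside_outside[OF c(1,2)] inside_no_overlap by blast
  qed
  moreover have "open_region_between f g \<inter> frontier S = {}"
    by (auto simp: frontier open_region_between_def path_image_graph_path)
  ultimately have "open_region_between f g \<subseteq> S"
    using connected_Int_frontier[OF connected_open_region_between[OF assms(3,4,7)]] by blast
  then show ?thesis
    using S_sub region_between_subset[OF assms(5,6)] closed frontier by blast
qed

section \<open>Slender adornments with base [0,1]\<close>

lemma slender_side_01_iff:
  "slender_side 0 1 g \<longleftrightarrow>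
     (\<forall>s t. 0 \<le> s \<and> s \<le> t \<and> t \<le> 1 \<longrightarrow> cmod (g s) \<le> cmod (g t) \<and> cmod (g t - 1) \<le> cmod (g s - 1))"
  by (simp add: slender_side_def dist_norm)

lemma cmod_le_cmod_iff_abs_Im_le:
  assumes "Re u = Re v"
  shows "cmod u \<le> cmod v \<longleftrightarrow> \<bar>Im u\<bar> \<le> \<bar>Im v\<bar>"
  using assms by (simp add: cmod_def abs_le_square_iff)

lemma Re_eq_cmod_power2_diff: "2 * Re u = (cmod u)\<^sup>2 - (cmod (u - 1))\<^sup>2 + 1"
  by (simp add: cmod_power2 power2_diff)

lemma slender_side_01_Re_mono:
  assumes "slender_side 0 1 g" "0 \<le> s" "s \<le> t" "t \<le> 1"
  shows "Re (g s) \<le> Re (g t)"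
proof -
  have "cmod (g s) \<le> cmod (g t)" "cmod (g t - 1) \<le> cmod (g s - 1)"
    using assms by (auto simp: slender_side_01_iff)
  then have "(cmod (g s))\<^sup>2 \<le> (cmod (g t))\<^sup>2" "(cmod (g t - 1))\<^sup>2 \<le> (cmod (g s - 1))\<^sup>2"
    by (simp_all add: power_mono)
  then show ?thesis
    using Re_eq_cmod_power2_diff[of "g s"] Re_eq_cmod_power2_diff[of "g t"] by linarith
qed

lemma slender_arc_Re_strict_mono:
  assumes "arc g" "slender_side 0 1 g"
  shows "strict_mono_on {0..1} (\<lambda>t. Re (g t))"
proof (rule strict_mono_onI)
  fix s t :: real assume "s \<in> {0..1}" "t \<in> {0..1}" "s < t"
  show "Re (g s) < Re (g t)"
  proof (rule ccontr)
    assume "\<not> Re (g s) < Re (g t)"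
    then have "Re (g t) = Re (g s)"
      using slender_side_01_Re_mono[OF assms(2), of s t] \<open>s \<in> _\<close> \<open>t \<in> _\<close> \<open>s < t\<close> by simp
    then have Re_const: "Re (g u) = Re (g s)" if "s \<le> u" "u \<le> t" for u
      using slender_side_01_Re_mono[OF assms(2), of s u] slender_side_01_Re_mono[OF assms(2), of u t]
        that \<open>s \<in> _\<close> \<open>t \<in> _\<close> by simp
    have Im_const: "\<bar>Im (g u)\<bar> = \<bar>Im (g s)\<bar>" if "s \<le> u" "u \<le> t" for u
    proof -
      have "cmod (g s) \<le> cmod (g u)" "cmod (g u - 1) \<le> cmod (g s - 1)"
        using assms(2) that \<open>s \<in> _\<close> \<open>t \<in> _\<close> by (auto simp: slender_side_01_iff)
      then show ?thesis
        using Re_const[OF that] by (simp add: cmod_le_cmod_iff_abs_Im_le)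
    qed
    have "g s \<noteq> g t"
      using assms(1) inj_onD[of g "{0..1}" s t] \<open>s \<in> _\<close> \<open>t \<in> _\<close> \<open>s < t\<close> by (auto simp: arc_def)
    then have "Im (g t) \<noteq> Im (g s)"
      using \<open>Re (g t) = Re (g s)\<close> by (auto simp: complex_eq_iff)
    then have "Im (g t) = - Im (g s)" "Im (g s) \<noteq> 0"
      using Im_const[of t] \<open>s < t\<close> by (auto simp: abs_eq_iff)
    then have "0 \<in> closed_segment (Im (g s)) (Im (g t))"
      by (auto simp: closed_segment_eq_real_ivl)
    moreover have "continuous_on {0..1} (\<lambda>u. Im (g u))"
      using arc_imp_path[OF assms(1)] unfolding path_def by (intro continuous_intros)
    then have "continuous_on (closed_segment s t) (\<lambda>u. Im (g u))"
      by (rule continuous_on_subset) (use \<open>s \<in> _\<close> \<open>t \<in> _\<close> in \<open>auto simp: closed_segment_eq_real_ivl\<close>)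
    ultimately obtain u where "u \<in> closed_segment s t" "Im (g u) = 0"
      using IVT'_closed_segment_real[where f = "\<lambda>u. Im (g u)" and a = s and b = t] by blast
    then show False
      using Im_const[of u] \<open>Im (g s) \<noteq> 0\<close> \<open>s < t\<close> by (simp add: closed_segment_eq_real_ivl)
  qed
qed

lemma slender_arc_graph:
  assumes "arc g" "pathstart g = 0" "pathfinish g = 1" "slender_side 0 1 g"
  obtains f where "continuous_on {0..1} f" "path_image g = path_image (graph_path f)"
    "slender_side 0 1 (graph_path f)" "f 0 = 0" "f 1 = 0"
proof -
  have cont_g: "continuous_on {0..1} g"
    using arc_imp_path[OF assms(1)] by (simp add: path_def)
  have ends: "g 0 = 0" "g 1 = 1"
    using assms(2,3) by (simp_all add: pathstart_def pathfinish_def)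
  obtain \<sigma> where \<sigma>: "homeomorphism {0..1} {0..1} (\<lambda>t. Re (g t)) \<sigma>" and \<sigma>_mono: "mono_on {0..1} \<sigma>"
    using strict_mono_on_unit_interval_homeomorphism[OF _ slender_arc_Re_strict_mono[OF assms(1,4)]]
      cont_g ends by (auto intro: continuous_intros)
  have \<sigma>_in: "\<sigma> t \<in> {0..1}" if "t \<in> {0..1}" for t
    using homeomorphism_image2[OF \<sigma>] that by blast
  define f where "f t = Im (g (\<sigma> t))" for t
  have g\<sigma>: "g (\<sigma> t) = graph_path f t" if "t \<in> {0..1}" for t
    using homeomorphism_apply2[OF \<sigma> that] by (simp add: f_def graph_path_def complex_eq_iff)
  have cont_f: "continuous_on {0..1} f"
    unfolding f_def using homeomorphism_cont2[OF \<sigma>] \<sigma>_in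
    by (intro continuous_intros continuous_on_compose2[OF cont_g]) auto
  have "path_image g = g ` \<sigma> ` {0..1}"
    by (simp add: path_image_def homeomorphism_image2[OF \<sigma>])
  also have "\<dots> = path_image (graph_path f)"
    unfolding path_image_def image_image using g\<sigma> by (rule image_cong[OF refl])
  finally have path: "path_image g = path_image (graph_path f)" .
  have slender: "slender_side 0 1 (graph_path f)"
    unfolding slender_side_def
  proof (intro allI impI)
    fix s t :: real assume st: "0 \<le> s \<and> s \<le> t \<and> t \<le> 1"
    then have "0 \<le> \<sigma> s \<and> \<sigma> s \<le> \<sigma> t \<and> \<sigma> t \<le> 1"
      using mono_onD[OF \<sigma>_mono] \<sigma>_in by fastforce
    with assms(4) have "dist (g (\<sigma> s)) 0 \<le> dist (g (\<sigma> t)) 0 \<and>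
                         dist (g (\<sigma> t)) 1 \<le> dist (g (\<sigma> s)) 1"
      unfolding slender_side_def by blast
    then show "dist (graph_path f s) 0 \<le> dist (graph_path f t) 0 \<and>
               dist (graph_path f t) 1 \<le> dist (graph_path f s) 1"
      using st g\<sigma>[of s] g\<sigma>[of t] by simp
  qed
  have "\<sigma> 0 = 0" "\<sigma> 1 = 1"
    using homeomorphism_apply1[OF \<sigma>, of 0] homeomorphism_apply1[OF \<sigma>, of 1] ends by simp_all
  then have "f 0 = 0" "f 1 = 0"
    using ends by (simp_all add: f_def)
  with cont_f path slender show ?thesis by (rule that)
qed

lemma slender_01_eq_region_between:
  assumes "slender S 0 1"
  obtains f g where "S = region_between f g"
    "slender_side 0 1 (graph_path f)" "f 0 = 0" "f 1 = 0"
    "slender_side 0 1 (graph_path g)" "g 0 = 0" "g 1 = 0"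
proof -
  obtain g1 g2 where sides: "adornment_sides S 0 1 g1 g2"
    and S: "compact S" "simply_connected S"
    using assms by (auto simp: slender_def adornment_def)
  then have "slender_side 0 1 g1" "slender_side 0 1 g2"
    using assms by (auto simp: slender_def)
  moreover have "arc g1" "pathstart g1 = 0" "pathfinish g1 = 1"
    "arc g2" "pathstart g2 = 0" "pathfinish g2 = 1"
    using sides by (simp_all add: adornment_sides_def)
  ultimately obtain f1 f2 where
      f1: "continuous_on {0..1} f1" "path_image g1 = path_image (graph_path f1)"
        "slender_side 0 1 (graph_path f1)" "f1 0 = 0" "f1 1 = 0"
    and f2: "continuous_on {0..1} f2" "path_image g2 = path_image (graph_path f2)"
        "slender_side 0 1 (graph_path f2)" "f2 0 = 0" "f2 1 = 0"
    using slender_arc_graph by metis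
  have frontier: "frontier S = path_image (graph_path f1) \<union> path_image (graph_path f2)"
    using sides f1(2) f2(2) by (simp add: adornment_sides_def)
  have "path_image (graph_path f1) \<inter> path_image (graph_path f2) = {0, 1}"
    using sides f1(2) f2(2) by (simp add: adornment_sides_def)
  then have "f1 t \<noteq> f2 t" if "0 < t" "t < 1" for t
    using graph_path_values_differ that by blast
  then consider "\<And>t. 0 < t \<Longrightarrow> t < 1 \<Longrightarrow> f1 t < f2 t" | "\<And>t. 0 < t \<Longrightarrow> t < 1 \<Longrightarrow> f2 t < f1 t"
    using continuous_graphs_ordered[OF f1(1) f2(1)] by blast
  then show ?thesis
  proof cases
    case 1
    then have "S = region_between f1 f2"
      using eq_region_between_if_frontier[OF S f1(1) f2(1)] f1(4,5) f2(4,5) frontier by simp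
    then show ?thesis using that f1 f2 by blast
  next
    case 2
    then have "S = region_between f2 f1"
      using eq_region_between_if_frontier[OF S f2(1) f1(1)] f1(4,5) f2(4,5) frontier
      by (simp add: Un_commute)
    then show ?thesis using that f1 f2 by blast
  qed
qed

lemma mem_lens_01_iff: "w \<in> lens 0 1 z \<longleftrightarrow> cmod w \<le> cmod z \<and> cmod (w - 1) \<le> cmod (z - 1)"
  by (simp add: lens_def dist_norm norm_minus_commute)

lemma lens_01_below_slender_graph:
  assumes f: "slender_side 0 1 (graph_path f)" "f 0 = 0" "f 1 = 0"
    and z: "0 \<le> Re z" "Re z \<le> 1" "\<bar>Im z\<bar> \<le> \<bar>f (Re z)\<bar>"
    and w: "w \<in> lens 0 1 z"
  shows "0 \<le> Re w \<and> Re w \<le> 1 \<and> \<bar>Im w\<bar> \<le> \<bar>f (Re w)\<bar>"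
proof -
  have mono: "cmod (graph_path f s) \<le> cmod (graph_path f t) \<and>
      cmod (graph_path f t - 1) \<le> cmod (graph_path f s - 1)" if "0 \<le> s" "s \<le> t" "t \<le> 1" for s t
    using f(1) that by (simp add: slender_side_01_iff)
  have ends: "graph_path f 0 = 0" "graph_path f 1 = 1"
    using f(2,3) by (simp_all add: graph_path_def complex_eq_iff)
  define P where "P = graph_path f (Re z)"
  have "cmod z \<le> cmod P" "cmod (z - 1) \<le> cmod (P - 1)"
    using z(3) by (simp_all add: P_def graph_path_def cmod_le_cmod_iff_abs_Im_le)
  moreover have "cmod P \<le> 1" "cmod (P - 1) \<le> 1"
    using mono[of "Re z" 1] mono[of 0 "Re z"] z(1,2) by (simp_all add: P_def ends)
  ultimately have "cmod w \<le> 1" "cmod (w - 1) \<le> 1"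
    using w by (auto simp: mem_lens_01_iff)
  then have Re_w: "0 \<le> Re w" "Re w \<le> 1"
    using abs_Re_le_cmod[of w] abs_Re_le_cmod[of "w - 1"] by auto
  define Q where "Q = graph_path f (Re w)"
  have "cmod w \<le> cmod Q \<or> cmod (w - 1) \<le> cmod (Q - 1)"
  proof (cases "Re w \<le> Re z")
    case True
    then show ?thesis
      using mono[of "Re w" "Re z"] Re_w z(2) w \<open>cmod (z - 1) \<le> cmod (P - 1)\<close>
      by (auto simp: P_def Q_def mem_lens_01_iff)
  next
    case False
    then show ?thesis
      using mono[of "Re z" "Re w"] Re_w z(1) w \<open>cmod z \<le> cmod P\<close>
      by (auto simp: P_def Q_def mem_lens_01_iff)
  qed
  then have "\<bar>Im w\<bar> \<le> \<bar>f (Re w)\<bar>"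
    by (auto simp: Q_def graph_path_def cmod_le_cmod_iff_abs_Im_le)
  with Re_w show ?thesis by simp
qed

lemma slender_01_half_lens_subset:
  assumes "slender S 0 1" "z \<in> S"
  shows "half_lens 0 1 z \<subseteq> S"
proof
  fix w assume w: "w \<in> half_lens 0 1 z"
  obtain f g where S: "S = region_between f g"
    and f: "slender_side 0 1 (graph_path f)" "f 0 = 0" "f 1 = 0"
    and g: "slender_side 0 1 (graph_path g)" "g 0 = 0" "g 1 = 0"
    using slender_01_eq_region_between[OF assms(1)] by blast
  have "closed_segment 0 1 \<subseteq> S"
    using assms(1) by (simp add: slender_def adornment_def)
  moreover have "complex_of_real t \<in> closed_segment 0 1" if "t \<in> {0..1}" for t
    using that by (auto simp: closed_segment_def scaleR_conv_of_real)
  ultimately have "complex_of_real t \<in> S" if "t \<in> {0..1}" for t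
    using that by blast
  then have base: "f t \<le> 0 \<and> 0 \<le> g t" if "t \<in> {0..1}" for t
    using that unfolding S region_between_def by fastforce
  have z: "0 \<le> Re z" "Re z \<le> 1" "f (Re z) \<le> Im z" "Im z \<le> g (Re z)"
    using assms(2) by (simp_all add: S region_between_def)
  have "w \<in> lens 0 1 z" "0 \<le> Im z * Im w"
    using w by (simp_all add: half_lens_def side_sign_def)
  then consider "0 \<le> Im z" "0 \<le> Im w" | "Im z \<le> 0" "Im w \<le> 0"
    by (auto simp: zero_le_mult_iff)
  then show "w \<in> S"
  proof cases
    case 1
    then have "\<bar>Im z\<bar> \<le> \<bar>g (Re z)\<bar>" using z by simp
    from lens_01_below_slender_graph[OF g z(1,2) this \<open>w \<in> lens 0 1 z\<close>]
    show ?thesis using 1 base[of "Re w"] by (simp add: S region_between_def)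
  next
    case 2
    then have "\<bar>Im z\<bar> \<le> \<bar>f (Re z)\<bar>" using z by simp
    from lens_01_below_slender_graph[OF f z(1,2) this \<open>w \<in> lens 0 1 z\<close>]
    show ?thesis using 2 base[of "Re w"] by (simp add: S region_between_def)
  qed
qed

lemma slender_half_lens_subset:
  assumes "slender A x y" "z \<in> A"
  shows "half_lens x y z \<subseteq> A"
proof -
  have "y - x \<noteq> 0" using assms(1) by (auto simp: slender_def adornment_def)
  define b where "b = 1 / (y - x)"
  define a where "a = - b * x"
  have ab: "b \<noteq> 0" "a + b * x = 0" "a + b * y = 1"
    using \<open>y - x \<noteq> 0\<close> by (simp_all add: a_def b_def flip: right_diff_distrib diff_divide_distrib)
  have "slender ((\<lambda>v. a + b * v) ` A) 0 1"
    using slender_affine_image[OF ab(1) assms(1), where a = a] ab by simp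
  then have "half_lens 0 1 (a + b * z) \<subseteq> (\<lambda>v. a + b * v) ` A"
    using slender_01_half_lens_subset assms(2) by blast
  then have "(\<lambda>v. a + b * v) ` half_lens x y z \<subseteq> (\<lambda>v. a + b * v) ` A"
    using half_lens_affine_image[OF ab(1), where a = a and x = x and y = y and z = z] ab by simp
  moreover have "inj (\<lambda>v. a + b * v)" using ab(1) by (auto simp: inj_on_def)
  ultimately show ?thesis by (simp add: inj_image_subset_iff)
qed

theorem mainTheorem1:
  fixes A :: "complex set" and x y :: complex
  assumes "slender A x y"
  shows "(\<forall>z\<in>A. half_lens x y z \<subseteq> A) \<and>
         (symmetric_adornment A x y \<longrightarrow> (\<forall>z\<in>A. lens x y z \<subseteq> A))"
proof -
  have half: "\<forall>z\<in>A. half_lens x y z \<subseteq> A"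
    using slender_half_lens_subset[OF assms] by blast
  moreover have "lens x y z \<subseteq> A" if "symmetric_adornment A x y" "z \<in> A" for z
  proof -
    have "x \<noteq> y" using assms by (simp add: slender_def adornment_def)
    moreover have "reflect_line x y z \<in> A"
      using that by (auto simp: symmetric_adornment_def)
    ultimately show ?thesis
      using lens_eq_half_lens_Un_reflect_line half \<open>z \<in> A\<close> by auto
  qed
  ultimately show ?thesis by blast
qed

end
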